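(* Let $n\ge0$. For all $x,y\in Q_n$ we have $L_{x,y}=R_{x,y}$ as permutations of $Q_n$.
   Context: Cayley--Dickson loops: $Q_0=\{1,-1\}\subset\mathbb{R}$ with conjugation $x^*=x$. For $n\ge1$, $Q_n=\{(x,0),(x,1)\mid x\in Q_{n-1}\}$ with multiplication $(x,0)(y,0)=(xy,0)$, $(x,0)(y,1)=(yx,1)$, $(x,1)(y,0)=(xy^*,1)$, $(x,1)(y,1)=(-y^*x,0)$ and conjugation $(x,0)^*=(x^*,0)$, $(x,1)^*=(-x,1)$, where $-(x,a)=(-x,a)$. $Q_n$ is a loop with neutral element $1=(1,0,\dots,0)$. Translations $L_x(a)=xa$, $R_x(a)=ax$; $L_{x,y}=L_{yx}^{-1}L_yL_x$ and $R_{x,y}=R_{xy}^{-1}R_yR_x$. *)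

theory Defs
  imports Main
begin

(* An element of Q_n is encoded as (s, bs) with s :: bool the sign of the
   underlying element of Q_0 = {1,-1} (s = True means -1) and bs a list of
   n bits; the Cayley--Dickson pair (x, a) with x = (s, bs) is encoded as
   (s, a # bs), i.e. the most recently adjoined bit is the head of the list. *)

type_synonym cd = "bool \<times> bool list"

definition Q :: "nat \<Rightarrow> cd set" where
  "Q n = {x. length (snd x) = n}"

definition cd_one :: "nat \<Rightarrow> cd" where
  "cd_one n = (False, replicate n False)"

definition cd_push :: "bool \<Rightarrow> cd \<Rightarrow> cd" where
  "cd_push a x = (fst x, a # snd x)"

definition cd_neg :: "cd \<Rightarrow> cd" where
  "cd_neg x = (\<not> fst x, snd x)"

fun cd_conj :: "cd \<Rightarrow> cd" where
  "cd_conj (s, []) = (s, [])"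
| "cd_conj (s, False # xs) = cd_push False (cd_conj (s, xs))"
| "cd_conj (s, True # xs) = cd_neg (s, True # xs)"

lemma length_cd_conj [simp]: "length (snd (cd_conj x)) = length (snd x)"
  by (induction x rule: cd_conj.induct) (auto simp: cd_push_def cd_neg_def)

function cd_mult :: "cd \<Rightarrow> cd \<Rightarrow> cd" where
  "cd_mult (s, []) (t, []) = (s \<noteq> t, [])"
| "cd_mult (s, False # xs) (t, False # ys) = cd_push False (cd_mult (s, xs) (t, ys))"
| "cd_mult (s, False # xs) (t, True # ys) = cd_push True (cd_mult (t, ys) (s, xs))"
| "cd_mult (s, True # xs) (t, False # ys) = cd_push True (cd_mult (s, xs) (cd_conj (t, ys)))"
| "cd_mult (s, True # xs) (t, True # ys) = cd_push False (cd_neg (cd_mult (cd_conj (t, ys)) (s, xs)))"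
| "cd_mult (s, []) (t, b # ys) = undefined"
| "cd_mult (s, a # xs) (t, []) = undefined"
  by pat_completeness auto
termination
  by (relation "measure (\<lambda>(x, y). length (snd x) + length (snd y))")
     (auto simp del: length_cd_conj simp: length_cd_conj[of "(_, _)", simplified])

definition Ltr :: "cd \<Rightarrow> cd \<Rightarrow> cd" where "Ltr x a = cd_mult x a"
definition Rtr :: "cd \<Rightarrow> cd \<Rightarrow> cd" where "Rtr x a = cd_mult a x"

definition Lxy :: "nat \<Rightarrow> cd \<Rightarrow> cd \<Rightarrow> cd \<Rightarrow> cd" where
  "Lxy n x y = the_inv_into (Q n) (Ltr (cd_mult y x)) \<circ> Ltr y \<circ> Ltr x"

definition Rxy :: "nat \<Rightarrow> cd \<Rightarrow> cd \<Rightarrow> cd \<Rightarrow> cd" where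
  "Rxy n x y = the_inv_into (Q n) (Rtr (cd_mult x y)) \<circ> Rtr y \<circ> Rtr x"

end

theory Submission imports Defs begin

(* Write an element of Q_n as (s, u): a sign s and a bit vector u of length n.
   Unfolding the Cayley--Dickson recursion shows that Q_n is a twisted group of (Z/2)^n:
       (s, u) (t, v) = (s + t + tw u v, u \<oplus> v)
   for an explicit "twist" tw on bit vectors (lemma cd_mult_eq).  Consequently every
   inner mapping fixes the bit vector and at most flips the sign, and the flip is an
   associator of tw:  L_{x,y} flips by  D v u w  and  R_{x,y} by  D w u v,  where
       D a b c = tw a b + tw (a \<oplus> b) c + tw b c + tw a (b \<oplus> c)
   (lemmas Lxy_eq, Rxy_eq).  The theorem therefore reduces to the symmetry
   D a b c = D c b a (lemma assoc_defect_sym), which is proved by induction on the length,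
   using the commutator formula  tw u v + tw v u = nz u + nz v + nz (u \<oplus> v)
   (lemma twist_commutator), nz being "nonzero".  Injectivity of translations
   makes the inverses in L_{x,y}, R_{x,y} computable by the_inv_into. *)

fun nz :: "bool list \<Rightarrow> bool" where
  "nz [] = False"
| "nz (b # bs) = (b \<or> nz bs)"

definition bxor :: "bool list \<Rightarrow> bool list \<Rightarrow> bool list" where
  "bxor u v = map2 (\<noteq>) u v"

lemma bxor_simps [simp]:
  "bxor [] v = []" "bxor u [] = []" "bxor (a # u) (b # v) = (a \<noteq> b) # bxor u v"
  by (auto simp: bxor_def)

lemma length_bxor [simp]: "length (bxor u v) = min (length u) (length v)"
  by (simp add: bxor_def)

lemma bxor_comm: "bxor u v = bxor v u"
  by (induction u v rule: list_induct2') auto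

lemma bxor_assoc: "bxor (bxor u v) w = bxor u (bxor v w)"
proof (induction u arbitrary: v w)
  case (Cons a u) then show ?case by (cases v; cases w) auto
qed simp

lemma bxor_left_comm: "bxor u (bxor v w) = bxor v (bxor u w)"
  by (metis bxor_assoc bxor_comm)

lemma bxor_cancel: "length u = length w \<Longrightarrow> bxor u (bxor u w) = w"
  by (induction u w rule: list_induct2) auto

lemma nz_bxor: "length u = length v \<Longrightarrow> nz (bxor u v) \<longleftrightarrow> u \<noteq> v"
  by (induction u v rule: list_induct2) auto

text \<open>The sign contributed by multiplying elements with bit vectors u and v.\<close>
function twist :: "bool list \<Rightarrow> bool list \<Rightarrow> bool" where
  "twist [] v = False"
| "twist (a # u) [] = False"
| "twist (False # u) (False # v) = twist u v"
| "twist (False # u) (True # v) = twist v u"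
| "twist (True # u) (False # v) = (twist u v \<noteq> nz v)"
| "twist (True # u) (True # v) = (nz v = twist v u)"
  by pat_completeness auto
termination
  by (relation "measure (\<lambda>(u, v). length u + length v)") auto

lemma cd_conj_eq: "cd_conj (s, u) = (s \<noteq> nz u, u)"
  by (induction "(s, u)" arbitrary: s u rule: cd_conj.induct)
     (auto simp: cd_push_def cd_neg_def)

lemma cd_mult_eq:
  "length u = n \<Longrightarrow> length v = n \<Longrightarrow>
    cd_mult (s, u) (t, v) = ((s \<noteq> t) \<noteq> twist u v, bxor u v)"
proof (induction n arbitrary: u v s t)
  case (Suc n)
  then obtain a u' b v' where "u = a # u'" "v = b # v'" "length u' = n" "length v' = n"
    by (metis length_Suc_conv)
  with Suc.IH show ?case
    by (cases a; cases b) (auto simp: cd_push_def cd_neg_def cd_conj_eq bxor_comm[of v' u'])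
qed simp

lemma cd_mult_in_Q: "x \<in> Q n \<Longrightarrow> y \<in> Q n \<Longrightarrow> cd_mult x y \<in> Q n"
  by (cases x; cases y) (simp add: Q_def cd_mult_eq)

lemma twist_commutator:
  "length u = length v \<Longrightarrow> (twist u v \<noteq> twist v u) = ((nz u \<noteq> nz v) \<noteq> nz (bxor u v))"
proof (induction u v rule: list_induct2)
  case (Cons a u b v)
  have "\<not> nz u \<Longrightarrow> bxor u v = v" "\<not> nz v \<Longrightarrow> bxor u v = u"
    using Cons.hyps by (induction u v rule: list_induct2) auto
  then show ?case using Cons nz_bxor[OF Cons.hyps] by (cases a; cases b) auto
qed simp

text \<open>Sign by which (a b) c and a (b c) differ, for elements with bit vectors a, b, c.\<close>
definition assoc_defect :: "bool list \<Rightarrow> bool list \<Rightarrow> bool list \<Rightarrow> bool" where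
  "assoc_defect a b c = (((twist a b \<noteq> twist (bxor a b) c) \<noteq> twist b c) \<noteq> twist a (bxor b c))"

lemma assoc_defect_sym:
  assumes "length a = n" "length b = n" "length c = n"
  shows "assoc_defect a b c = assoc_defect c b a"
  using assms
proof (induction n arbitrary: a b c)
  case 0 then show ?case by (simp add: assoc_defect_def)
next
  case (Suc n)
  obtain p a' q b' r c' where split: "a = p # a'" "b = q # b'" "c = r # c'"
    and len: "length a' = n" "length b' = n" "length c' = n"
    using Suc.prems by (auto simp: length_Suc_conv)
  have IH: "assoc_defect a' b' c' = assoc_defect c' b' a'"
    using Suc.IH len by blast
  have comm: "(twist u v \<noteq> twist v u) = ((nz u \<noteq> nz v) \<noteq> nz (bxor u v))"
    if "length u = n" "length v = n" for u v
    using that twist_commutator[of u v] by simp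
  note comms = comm[of a' b'] comm[of b' c'] comm[of "bxor a' b'" c']
    comm[of a' "bxor b' c'"] comm[of a' c']
  show ?case unfolding split using IH comms len
    by (cases p; cases q; cases r;
        simp add: assoc_defect_def bxor_assoc bxor_comm bxor_left_comm; argo)
qed

text \<open>Translations are injective on Q_n: xor with the bit vector of z recovers the bit
  vector of the argument, and then its sign is determined.\<close>
lemma inj_Ltr: "z \<in> Q n \<Longrightarrow> inj_on (Ltr z) (Q n)"
proof (rule inj_onI)
  fix a b assume "z \<in> Q n" "a \<in> Q n" "b \<in> Q n" "Ltr z a = Ltr z b"
  then show "a = b" unfolding Ltr_def
    by (cases z; cases a; cases b)
       (auto simp: Q_def cd_mult_eq bxor_cancel dest: arg_cong[of _ _ "bxor (snd z)"])
qed

lemma inj_Rtr: "z \<in> Q n \<Longrightarrow> inj_on (Rtr z) (Q n)"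
proof (rule inj_onI)
  fix a b assume "z \<in> Q n" "a \<in> Q n" "b \<in> Q n" "Rtr z a = Rtr z b"
  then show "a = b" unfolding Rtr_def
    by (cases z; cases a; cases b)
       (auto simp: Q_def cd_mult_eq bxor_comm bxor_cancel dest: arg_cong[of _ _ "bxor (snd z)"])
qed

lemma Lxy_eq:
  assumes "(s, u) \<in> Q n" "(t, v) \<in> Q n" "(r, w) \<in> Q n"
  shows "Lxy n (s, u) (t, v) (r, w) = (r \<noteq> assoc_defect v u w, w)"
proof -
  let ?a' = "(r \<noteq> assoc_defect v u w, w)"
  have len: "length u = n" "length v = n" "length w = n" using assms by (auto simp: Q_def)
  have "Ltr (cd_mult (t, v) (s, u)) ?a' = Ltr (t, v) (Ltr (s, u) (r, w))"
    using len unfolding Ltr_def by (simp add: cd_mult_eq assoc_defect_def bxor_assoc) argo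
  moreover have "?a' \<in> Q n" using len by (simp add: Q_def)
  ultimately show ?thesis unfolding Lxy_def comp_apply
    using the_inv_into_f_eq[OF inj_Ltr[OF cd_mult_in_Q]] assms by simp
qed

lemma Rxy_eq:
  assumes "(s, u) \<in> Q n" "(t, v) \<in> Q n" "(r, w) \<in> Q n"
  shows "Rxy n (s, u) (t, v) (r, w) = (r \<noteq> assoc_defect w u v, w)"
proof -
  let ?a' = "(r \<noteq> assoc_defect w u v, w)"
  have len: "length u = n" "length v = n" "length w = n" using assms by (auto simp: Q_def)
  have "Rtr (cd_mult (s, u) (t, v)) ?a' = Rtr (t, v) (Rtr (s, u) (r, w))"
    using len unfolding Rtr_def by (simp add: cd_mult_eq assoc_defect_def bxor_assoc) argo
  moreover have "?a' \<in> Q n" using len by (simp add: Q_def)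
  ultimately show ?thesis unfolding Rxy_def comp_apply
    using the_inv_into_f_eq[OF inj_Rtr[OF cd_mult_in_Q]] assms by simp
qed

theorem mainTheorem4:
  fixes n :: nat and x y :: cd
  assumes "x \<in> Q n" and "y \<in> Q n"
  shows "\<forall>a \<in> Q n. Lxy n x y a = Rxy n x y a"
proof
  fix a assume "a \<in> Q n"
  obtain s u t v r w where xya: "x = (s, u)" "y = (t, v)" "a = (r, w)"
    by (cases x; cases y; cases a) auto
  have "assoc_defect v u w = assoc_defect w u v"
    using assms \<open>a \<in> Q n\<close> xya by (intro assoc_defect_sym) (auto simp: Q_def)
  then show "Lxy n x y a = Rxy n x y a"
    using Lxy_eq Rxy_eq assms \<open>a \<in> Q n\<close> unfolding xya by simp
qed

end
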